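(* Let $\Gamma$ and $\Delta$ be finite subsets of ${\sf Frm}$. If the sequent $\Gamma\Rightarrow\Delta$ is derivable in ${\sf GWF_{N_2}}$, then $\vdash_{\sf WF_{N_2}}\bigwedge\Gamma\rightarrow\bigvee\Delta$.
   Context: Language: countably many atoms $p,q,\dots$, the constant $\bot$, and binary connectives $\wedge,\vee,\rightarrow$ ($\rightarrow$ is strict implication). ${\sf Frm}$ is the set of formulas built from atoms and $\bot$ with $\wedge,\vee,\rightarrow$; $A,B,C,D$ range over ${\sf Frm}$. Let $\supset$ be a new binary symbol (material implication) and ${\sf Frm_1}={\sf Frm}\cup\{A\supset B : A,B\in{\sf Frm}\}$ (no nesting of $\supset$). ${\sf Frm_2}$ is the smallest set containing ${\sf Frm_1}$ and closed under $\wedge$ and $\vee$; $X,Y$ range over ${\sf Frm_2}$. A sequent is $\Gamma\Rightarrow\Delta$ with $\Gamma,\Delta$ finite multisets of ${\sf Frm_2}$-formulas. The calculus ${\sf GWF_{N_2}}$ has initial sequents $(id)$ $p,\Gamma\Rightarrow\Delta,p$ ($p$ an atom) and $(L_\bot)$ $\bot,\Gamma\Rightarrow\Delta$, and rules (premises / conclusion): $(L_\wedge)$ $X,Y,\Gamma\Rightarrow\Delta$ / $X\wedge Y,\Gamma\Rightarrow\Delta$; $(R_\wedge)$ $\Gamma\Rightarrow\Delta,X$ and $\Gamma\Rightarrow\Delta,Y$ / $\Gamma\Rightarrow\Delta,X\wedge Y$; $(L_\vee)$ $X,\Gamma\Rightarrow\Delta$ and $Y,\Gamma\Rightarrow\Delta$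 / $X\vee Y,\Gamma\Rightarrow\Delta$; $(R_\vee)$ $\Gamma\Rightarrow\Delta,X,Y$ / $\Gamma\Rightarrow\Delta,X\vee Y$; $(L_\supset)$ $\Gamma\Rightarrow\Delta,A$ and $B,\Gamma\Rightarrow\Delta$ / $A\supset B,\Gamma\Rightarrow\Delta$; $(R_\supset)$ $A,\Gamma\Rightarrow\Delta,B$ / $\Gamma\Rightarrow\Delta,A\supset B$; $(LR_\rightarrow)$ $C\supset D,A\Rightarrow B$ / $\Gamma,C\rightarrow D\Rightarrow\Delta,A\rightarrow B$; $(R_\rightarrow)$ $A\Rightarrow B$ / $\Gamma\Rightarrow\Delta,A\rightarrow B$. Here $A,B,C,D\in{\sf Frm}$, $X,Y\in{\sf Frm_2}$, and $\Gamma,\Delta$ are arbitrary finite multisets of ${\sf Frm_2}$-formulas. The Hilbert system ${\sf WF_{N_2}}$ over ${\sf Frm}$ has axiom schemes $A\rightarrow(A\vee B)$; $B\rightarrow(A\vee B)$; $(A\wedge B)\rightarrow A$; $(A\wedge B)\rightarrow B$; $A\wedge(B\vee C)\rightarrow(A\wedge B)\vee(A\wedge C)$; $A\rightarrow A$; $\bot\rightarrow A$; and rules (from theorems to a theorem): from $A$ and $A\rightarrow B$ infer $B$; from $A$ infer $B\rightarrow A$; from $A\rightarrow B$ and $B\rightarrow C$ infer $A\rightarrow C$; from $A\rightarrow B$ and $A\rightarrow C$ infer $A\rightarrow(B\wedge C)$; from $A\rightarrow C$ and $B\rightarrow C$ infer $(A\vee B)\rightarrow C$; from $A$ and $B$ infer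 $A\wedge B$; (${\sf N_2}$) from $C\rightarrow A\vee D$ and $C\wedge B\rightarrow D$ infer $(A\rightarrow B)\rightarrow(C\rightarrow D)$. $\vdash_{\sf WF_{N_2}}A$ means $A$ is a theorem of this system. $\bigwedge\Gamma$ and $\bigvee\Delta$ denote the conjunction and disjunction of the members of $\Gamma$, resp. $\Delta$ (with the empty conjunction read as $\top:=\bot\rightarrow\bot$ and the empty disjunction as $\bot$). *)

theory Defs
  imports Main "HOL-Library.Multiset"
begin

text \<open>One datatype for all formulas; SImp is strict implication, MImp material implication.\<close>
datatype fm = Atom nat | Bot | Conj fm fm | Disj fm fm | SImp fm fm | MImp fm fm

fun frm :: "fm \<Rightarrow> bool" where
  "frm (Atom p) = True"
| "frm Bot = True"
| "frm (Conj A B) = (frm A \<and> frm B)"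
| "frm (Disj A B) = (frm A \<and> frm B)"
| "frm (SImp A B) = (frm A \<and> frm B)"
| "frm (MImp A B) = False"

text \<open>Frm2: closure of Frm1 = Frm plus non-nested material implications under conjunction and disjunction.\<close>
fun frm2 :: "fm \<Rightarrow> bool" where
  "frm2 (Atom p) = True"
| "frm2 Bot = True"
| "frm2 (Conj X Y) = (frm2 X \<and> frm2 Y)"
| "frm2 (Disj X Y) = (frm2 X \<and> frm2 Y)"
| "frm2 (SImp A B) = (frm A \<and> frm B)"
| "frm2 (MImp A B) = (frm A \<and> frm B)"

definition wf_seq :: "fm multiset \<Rightarrow> fm multiset \<Rightarrow> bool" where
  "wf_seq G D \<longleftrightarrow> (\<forall>X\<in>#G. frm2 X) \<and> (\<forall>X\<in>#D. frm2 X)"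

inductive gwf :: "fm multiset \<Rightarrow> fm multiset \<Rightarrow> bool" where
  id: "wf_seq (add_mset (Atom p) G) (add_mset (Atom p) D) \<Longrightarrow>
       gwf (add_mset (Atom p) G) (add_mset (Atom p) D)"
| LBot: "wf_seq (add_mset Bot G) D \<Longrightarrow> gwf (add_mset Bot G) D"
| LConj: "wf_seq (add_mset (Conj X Y) G) D \<Longrightarrow> gwf (add_mset X (add_mset Y G)) D \<Longrightarrow>
       gwf (add_mset (Conj X Y) G) D"
| RConj: "wf_seq G (add_mset (Conj X Y) D) \<Longrightarrow> gwf G (add_mset X D) \<Longrightarrow> gwf G (add_mset Y D) \<Longrightarrow>
       gwf G (add_mset (Conj X Y) D)"
| LDisj: "wf_seq (add_mset (Disj X Y) G) D \<Longrightarrow> gwf (add_mset X G) D \<Longrightarrow> gwf (add_mset Y G) D \<Longrightarrow>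
       gwf (add_mset (Disj X Y) G) D"
| RDisj: "wf_seq G (add_mset (Disj X Y) D) \<Longrightarrow> gwf G (add_mset X (add_mset Y D)) \<Longrightarrow>
       gwf G (add_mset (Disj X Y) D)"
| LMImp: "wf_seq (add_mset (MImp A B) G) D \<Longrightarrow> gwf G (add_mset A D) \<Longrightarrow> gwf (add_mset B G) D \<Longrightarrow>
       gwf (add_mset (MImp A B) G) D"
| RMImp: "wf_seq G (add_mset (MImp A B) D) \<Longrightarrow> gwf (add_mset A G) (add_mset B D) \<Longrightarrow>
       gwf G (add_mset (MImp A B) D)"
| LRSImp: "wf_seq (add_mset (SImp C E) G) (add_mset (SImp A B) D) \<Longrightarrow>
       gwf {# MImp C E, A #} {# B #} \<Longrightarrow>
       gwf (add_mset (SImp C E) G) (add_mset (SImp A B) D)"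
| RSImp: "wf_seq G (add_mset (SImp A B) D) \<Longrightarrow> gwf {# A #} {# B #} \<Longrightarrow>
       gwf G (add_mset (SImp A B) D)"

definition Top :: fm where "Top = SImp Bot Bot"

inductive wfn2 :: "fm \<Rightarrow> bool" where
  ax1: "frm A \<Longrightarrow> frm B \<Longrightarrow> wfn2 (SImp A (Disj A B))"
| ax2: "frm A \<Longrightarrow> frm B \<Longrightarrow> wfn2 (SImp B (Disj A B))"
| ax3: "frm A \<Longrightarrow> frm B \<Longrightarrow> wfn2 (SImp (Conj A B) A)"
| ax4: "frm A \<Longrightarrow> frm B \<Longrightarrow> wfn2 (SImp (Conj A B) B)"
| ax5: "frm A \<Longrightarrow> frm B \<Longrightarrow> frm C \<Longrightarrow>
        wfn2 (SImp (Conj A (Disj B C)) (Disj (Conj A B) (Conj A C)))"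
| ax6: "frm A \<Longrightarrow> wfn2 (SImp A A)"
| ax7: "frm A \<Longrightarrow> wfn2 (SImp Bot A)"
| mp: "wfn2 A \<Longrightarrow> wfn2 (SImp A B) \<Longrightarrow> wfn2 B"
| wk: "wfn2 A \<Longrightarrow> frm B \<Longrightarrow> wfn2 (SImp B A)"
| trans: "wfn2 (SImp A B) \<Longrightarrow> wfn2 (SImp B C) \<Longrightarrow> wfn2 (SImp A C)"
| conjR: "wfn2 (SImp A B) \<Longrightarrow> wfn2 (SImp A C) \<Longrightarrow> wfn2 (SImp A (Conj B C))"
| disjL: "wfn2 (SImp A C) \<Longrightarrow> wfn2 (SImp B C) \<Longrightarrow> wfn2 (SImp (Disj A B) C)"
| adj: "wfn2 A \<Longrightarrow> wfn2 B \<Longrightarrow> wfn2 (Conj A B)"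
| N2: "wfn2 (SImp C (Disj A D)) \<Longrightarrow> wfn2 (SImp (Conj C B) D) \<Longrightarrow>
       wfn2 (SImp (SImp A B) (SImp C D))"

fun conjs :: "fm list \<Rightarrow> fm" where
  "conjs [] = Top"
| "conjs [A] = A"
| "conjs (A # B # xs) = Conj A (conjs (B # xs))"

fun disjs :: "fm list \<Rightarrow> fm" where
  "disjs [] = Bot"
| "disjs [A] = A"
| "disjs (A # B # xs) = Disj A (disjs (B # xs))"

end

theory Submission
  imports Defs
begin

text \<open>
  Call a formula of Frm true at a prime filter F (a set of formulas closed under conjunction and
  provable strict implication) when it belongs to F, and a material implication A \<supset> B true at F
  when A \<notin> F or B \<in> F. Every rule of GWF_N2 preserves, at every prime filter, the property that
  some succedent formula is true whenever all antecedent formulas are. For the strict-implication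
  rules this rests on the prime filter theorem: the premise holds at every prime filter by
  induction, so A \<rightarrow> B, respectively the two premises of rule N2, are provable, and
  theorems lie in every prime filter. Conjunctions and disjunctions are evaluated componentwise at
  prime filters, so every prime filter containing \<bigwedge>\<Gamma> contains \<bigvee>\<Delta>, and the prime filter
  theorem once more gives the claim.
\<close>

lemma frm_Top [simp]: "frm Top"
  by (simp add: Top_def)

lemma wfn2_Top: "wfn2 Top"
  unfolding Top_def by (rule ax7) simp

lemma wfn2_Conj_mono_left:
  assumes "wfn2 (SImp m m')" "frm m" "frm X"
  shows "wfn2 (SImp (Conj m X) (Conj m' X))"
  using assms by (intro conjR trans[OF ax3] ax4)

lemma wfn2_Conj_Conj_left1:
  "frm m1 \<Longrightarrow> frm m2 \<Longrightarrow> frm X \<Longrightarrow> wfn2 (SImp (Conj (Conj m1 m2) X) (Conj m1 X))"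
  by (intro wfn2_Conj_mono_left ax3) simp_all

lemma wfn2_Conj_Conj_left2:
  "frm m1 \<Longrightarrow> frm m2 \<Longrightarrow> frm X \<Longrightarrow> wfn2 (SImp (Conj (Conj m1 m2) X) (Conj m2 X))"
  by (intro wfn2_Conj_mono_left ax4) simp_all

definition wfn2_filter :: "fm set \<Rightarrow> bool" where
  "wfn2_filter F \<longleftrightarrow> (\<forall>X\<in>F. frm X)
     \<and> (\<forall>X Y. X \<in> F \<longrightarrow> frm Y \<longrightarrow> wfn2 (SImp X Y) \<longrightarrow> Y \<in> F)
     \<and> (\<forall>X\<in>F. \<forall>Y\<in>F. Conj X Y \<in> F)"

definition prime_filter :: "fm set \<Rightarrow> bool" where
  "prime_filter F \<longleftrightarrow> wfn2_filter F \<and> Top \<in> F \<and> Bot \<notin> F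
     \<and> (\<forall>X Y. Disj X Y \<in> F \<longrightarrow> X \<in> F \<or> Y \<in> F)"

lemma wfn2_filterI:
  assumes "\<And>X. X \<in> F \<Longrightarrow> frm X"
    and "\<And>X Y. X \<in> F \<Longrightarrow> frm Y \<Longrightarrow> wfn2 (SImp X Y) \<Longrightarrow> Y \<in> F"
    and "\<And>X Y. X \<in> F \<Longrightarrow> Y \<in> F \<Longrightarrow> Conj X Y \<in> F"
  shows "wfn2_filter F"
  using assms unfolding wfn2_filter_def by blast

lemma wfn2_filter_frm: "wfn2_filter F \<Longrightarrow> X \<in> F \<Longrightarrow> frm X"
  unfolding wfn2_filter_def by blast

lemma wfn2_filter_up: "wfn2_filter F \<Longrightarrow> X \<in> F \<Longrightarrow> frm Y \<Longrightarrow> wfn2 (SImp X Y) \<Longrightarrow> Y \<in> F"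
  unfolding wfn2_filter_def by blast

lemma wfn2_filter_Conj: "wfn2_filter F \<Longrightarrow> X \<in> F \<Longrightarrow> Y \<in> F \<Longrightarrow> Conj X Y \<in> F"
  unfolding wfn2_filter_def by blast

lemma wfn2_filter_Top: "wfn2_filter F \<Longrightarrow> X \<in> F \<Longrightarrow> Top \<in> F"
  by (meson frm_Top wfn2_Top wfn2_filter_frm wfn2_filter_up wk)

lemma wfn2_filter_principal: "wfn2_filter {X. frm X \<and> wfn2 (SImp A X)}"
proof (rule wfn2_filterI)
  fix X Y assume "X \<in> {X. frm X \<and> wfn2 (SImp A X)}" "frm Y" "wfn2 (SImp X Y)"
  then show "Y \<in> {X. frm X \<and> wfn2 (SImp A X)}" using trans[of A X Y] by blast
qed (auto intro: conjR)

lemma wfn2_filter_Union: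
  assumes "C \<noteq> {}" "\<forall>F\<in>C. wfn2_filter F" "\<forall>F\<in>C. \<forall>G\<in>C. F \<subseteq> G \<or> G \<subseteq> F"
  shows "wfn2_filter (\<Union>C)"
proof (rule wfn2_filterI)
  fix X Y assume "X \<in> \<Union>C" "Y \<in> \<Union>C"
  then obtain F G where "F \<in> C" "G \<in> C" "X \<in> F" "Y \<in> G" by blast
  with assms(2,3) show "Conj X Y \<in> \<Union>C"
    by (metis UnionI subsetD wfn2_filter_Conj)
next
  fix X Y assume "X \<in> \<Union>C" "frm Y" "wfn2 (SImp X Y)"
  with assms(2) show "Y \<in> \<Union>C" by (meson UnionE UnionI wfn2_filter_up)
qed (use assms(2) wfn2_filter_frm in blast)

definition extend_filter :: "fm set \<Rightarrow> fm \<Rightarrow> fm set" where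
  "extend_filter M X = {Z. frm Z \<and> (\<exists>m\<in>M. wfn2 (SImp (Conj m X) Z))}"

lemma wfn2_filter_extend_filter:
  assumes M: "wfn2_filter M" and "frm X"
  shows "wfn2_filter (extend_filter M X)"
proof (rule wfn2_filterI)
  fix Z1 Z2 assume "Z1 \<in> extend_filter M X" "Z2 \<in> extend_filter M X"
  then obtain m1 m2 where m: "m1 \<in> M" "m2 \<in> M" "frm Z1" "frm Z2"
    "wfn2 (SImp (Conj m1 X) Z1)" "wfn2 (SImp (Conj m2 X) Z2)"
    unfolding extend_filter_def by blast
  have "frm m1" "frm m2" using M m by (auto intro: wfn2_filter_frm)
  with m \<open>frm X\<close> have "wfn2 (SImp (Conj (Conj m1 m2) X) (Conj Z1 Z2))"
    by (intro conjR trans[OF wfn2_Conj_Conj_left1] trans[OF wfn2_Conj_Conj_left2])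
  with m M show "Conj Z1 Z2 \<in> extend_filter M X"
    unfolding extend_filter_def by (auto intro: wfn2_filter_Conj)
next
  fix Z Y assume "Z \<in> extend_filter M X" "frm Y" "wfn2 (SImp Z Y)"
  then show "Y \<in> extend_filter M X"
    unfolding extend_filter_def using trans[of "Conj _ X" Z Y] by blast
qed (simp add: extend_filter_def)

lemma extend_filter_superset:
  assumes M: "wfn2_filter M" "m \<in> M" and X: "frm X"
  shows "insert X M \<subseteq> extend_filter M X"
proof -
  have "M \<subseteq> extend_filter M X"
    using M X by (auto simp: extend_filter_def intro: wfn2_filter_frm ax3)
  moreover have "X \<in> extend_filter M X"
    using X wfn2_filter_Top[OF M] by (auto simp: extend_filter_def intro!: bexI[of _ Top] ax4)
  ultimately show ?thesis by blast
qed

lemma maximal_filter_exists: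
  assumes "frm A" "\<not> wfn2 (SImp A B)"
  shows "\<exists>M. wfn2_filter M \<and> A \<in> M \<and> B \<notin> M
           \<and> (\<forall>F. wfn2_filter F \<and> A \<in> F \<and> B \<notin> F \<and> M \<subseteq> F \<longrightarrow> F = M)"
proof -
  let ?S = "{F. wfn2_filter F \<and> A \<in> F \<and> B \<notin> F}"
  have "\<exists>U\<in>?S. \<forall>F\<in>C. F \<subseteq> U" if C: "C \<in> chains ?S" for C
  proof (cases "C = {}")
    case True
    have "{X. frm X \<and> wfn2 (SImp A X)} \<in> ?S"
      using wfn2_filter_principal ax6[OF assms(1)] assms by simp
    with True show ?thesis by blast
  next
    case False
    have sub: "C \<subseteq> ?S" using chainsD2[OF C] .
    have "\<forall>F\<in>C. \<forall>G\<in>C. F \<subseteq> G \<or> G \<subseteq> F" using chainsD[OF C] by blast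
    then have "wfn2_filter (\<Union>C)" using wfn2_filter_Union[OF False] sub by blast
    moreover have "A \<in> \<Union>C" "B \<notin> \<Union>C" using False sub by blast+
    ultimately show ?thesis by blast
  qed
  then obtain M where "M \<in> ?S" "\<forall>F\<in>?S. M \<subseteq> F \<longrightarrow> F = M"
    using Zorn_Lemma2[of ?S] by blast
  then show ?thesis by blast
qed

lemma maximal_filter_prime:
  assumes M: "wfn2_filter M" "A \<in> M" "B \<notin> M" and "frm B"
    and max: "\<And>F. wfn2_filter F \<Longrightarrow> A \<in> F \<Longrightarrow> B \<notin> F \<Longrightarrow> M \<subseteq> F \<Longrightarrow> F = M"
  shows "prime_filter M"
proof -
  have B_from_extension: "\<exists>m\<in>M. wfn2 (SImp (Conj m X) B)" if "frm X" "X \<notin> M" for X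
  proof -
    have "wfn2_filter (extend_filter M X)" "insert X M \<subseteq> extend_filter M X"
      using wfn2_filter_extend_filter extend_filter_superset M that by blast+
    with max M that have "B \<in> extend_filter M X" by blast
    then show ?thesis unfolding extend_filter_def by blast
  qed
  have "X \<in> M \<or> Y \<in> M" if D: "Disj X Y \<in> M" for X Y
  proof (rule ccontr)
    assume "\<not> ?thesis"
    moreover have fX: "frm X" and fY: "frm Y" using wfn2_filter_frm[OF M(1) D] by auto
    ultimately obtain m1 m2 where m: "m1 \<in> M" "m2 \<in> M"
      "wfn2 (SImp (Conj m1 X) B)" "wfn2 (SImp (Conj m2 Y) B)"
      using B_from_extension by meson
    let ?m = "Conj m1 m2"
    have fm: "frm m1" "frm m2" using M(1) m by (auto intro: wfn2_filter_frm)
    have "Conj ?m (Disj X Y) \<in> M" using M(1) m D by (auto intro: wfn2_filter_Conj)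
    moreover have "wfn2 (SImp (Conj ?m (Disj X Y)) B)"
    proof (rule trans)
      show "wfn2 (SImp (Conj ?m (Disj X Y)) (Disj (Conj ?m X) (Conj ?m Y)))"
        using fm fX fY by (auto intro: ax5)
      show "wfn2 (SImp (Disj (Conj ?m X) (Conj ?m Y)) B)"
        using fm fX fY m
        by (intro disjL trans[OF wfn2_Conj_Conj_left1] trans[OF wfn2_Conj_Conj_left2])
    qed
    ultimately show False using wfn2_filter_up[OF M(1)] \<open>frm B\<close> M(3) by blast
  qed
  moreover have "Bot \<notin> M" using wfn2_filter_up[OF M(1) _ \<open>frm B\<close> ax7[OF \<open>frm B\<close>]] M(3) by blast
  ultimately show ?thesis
    unfolding prime_filter_def using M wfn2_filter_Top by blast
qed

lemma prime_filter_separation: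
  assumes "frm A" "frm B" "\<not> wfn2 (SImp A B)"
  shows "\<exists>F. prime_filter F \<and> A \<in> F \<and> B \<notin> F"
  using maximal_filter_exists[OF assms(1,3)] maximal_filter_prime[OF _ _ _ assms(2)] by metis

lemma wfn2_SImp_if_prime_filters:
  assumes "frm A" "frm B" "\<And>F. prime_filter F \<Longrightarrow> A \<in> F \<Longrightarrow> B \<in> F"
  shows "wfn2 (SImp A B)"
  using prime_filter_separation[OF assms(1,2)] assms(3) by blast

lemma prime_filter_Conj_iff:
  "prime_filter F \<Longrightarrow> frm X \<Longrightarrow> frm Y \<Longrightarrow> Conj X Y \<in> F \<longleftrightarrow> X \<in> F \<and> Y \<in> F"
  unfolding prime_filter_def by (meson ax3 ax4 wfn2_filter_Conj wfn2_filter_up)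

lemma prime_filter_Disj_iff:
  "prime_filter F \<Longrightarrow> frm X \<Longrightarrow> frm Y \<Longrightarrow> Disj X Y \<in> F \<longleftrightarrow> X \<in> F \<or> Y \<in> F"
  unfolding prime_filter_def by (meson ax1 ax2 frm.simps(4) wfn2_filter_up)

lemma prime_filter_theorem: "prime_filter F \<Longrightarrow> wfn2 X \<Longrightarrow> frm X \<Longrightarrow> X \<in> F"
  unfolding prime_filter_def by (meson frm_Top wk wfn2_filter_up)

fun holds :: "fm set \<Rightarrow> fm \<Rightarrow> bool" where
  "holds F (Conj X Y) \<longleftrightarrow> holds F X \<and> holds F Y"
| "holds F (Disj X Y) \<longleftrightarrow> holds F X \<or> holds F Y"
| "holds F (MImp A B) \<longleftrightarrow> A \<notin> F \<or> B \<in> F"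
| "holds F (Atom p) \<longleftrightarrow> Atom p \<in> F"
| "holds F Bot \<longleftrightarrow> Bot \<in> F"
| "holds F (SImp A B) \<longleftrightarrow> SImp A B \<in> F"

lemma holds_iff_mem: "prime_filter F \<Longrightarrow> frm X \<Longrightarrow> holds F X \<longleftrightarrow> X \<in> F"
  by (induction X) (auto simp: prime_filter_Conj_iff prime_filter_Disj_iff)

lemma gwf_sound:
  "gwf G D \<Longrightarrow> prime_filter F \<Longrightarrow> \<forall>X\<in>#G. holds F X \<Longrightarrow> \<exists>X\<in>#D. holds F X"
proof (induction G D arbitrary: F rule: gwf.induct)
  case (LBot G D)
  then show ?case by (auto simp: prime_filter_def)
next
  case (LMImp A B G D)
  then show ?case by (cases "A \<in> F") (auto simp: wf_seq_def holds_iff_mem)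
next
  case (RMImp G A B D)
  then show ?case by (cases "A \<in> F") (auto simp: wf_seq_def holds_iff_mem)
next
  case (LRSImp C E G A B D)
  have f: "frm C" "frm E" "frm A" "frm B" using LRSImp.hyps(1) by (auto simp: wf_seq_def)
  have IH: "B \<in> F'" if "prime_filter F'" "C \<notin> F' \<or> E \<in> F'" "A \<in> F'" for F'
    using LRSImp.IH[OF that(1)] that f by (auto simp: holds_iff_mem)
  have "wfn2 (SImp A (Disj C B))"
    by (rule wfn2_SImp_if_prime_filters) (use f IH prime_filter_Disj_iff in auto)
  moreover have "wfn2 (SImp (Conj A E) B)"
    by (rule wfn2_SImp_if_prime_filters) (use f IH prime_filter_Conj_iff in auto)
  ultimately have "wfn2 (SImp (SImp C E) (SImp A B))" by (rule N2)
  moreover have "SImp C E \<in> F" using LRSImp.prems by auto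
  ultimately have "SImp A B \<in> F"
    using prime_filter_def wfn2_filter_up f LRSImp.prems(1) by (metis frm.simps(5))
  then show ?case by auto
next
  case (RSImp G A B D)
  have f: "frm A" "frm B" using RSImp.hyps(1) by (auto simp: wf_seq_def)
  have "wfn2 (SImp A B)"
    by (rule wfn2_SImp_if_prime_filters) (use f RSImp.IH holds_iff_mem in auto)
  then have "SImp A B \<in> F" using prime_filter_theorem[OF RSImp.prems(1)] f by auto
  then show ?case by auto
qed fastforce+

lemma frm_conjs: "\<forall>X\<in>set xs. frm X \<Longrightarrow> frm (conjs xs)"
  by (induction xs rule: conjs.induct) auto

lemma frm_disjs: "\<forall>X\<in>set xs. frm X \<Longrightarrow> frm (disjs xs)"
  by (induction xs rule: disjs.induct) auto

lemma prime_filter_conjs_iff: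
  "prime_filter F \<Longrightarrow> \<forall>X\<in>set xs. frm X \<Longrightarrow> conjs xs \<in> F \<longleftrightarrow> (\<forall>X\<in>set xs. X \<in> F)"
  by (induction xs rule: conjs.induct)
    (auto simp: prime_filter_Conj_iff frm_conjs, simp add: prime_filter_def)

lemma prime_filter_disjs_iff:
  "prime_filter F \<Longrightarrow> \<forall>X\<in>set xs. frm X \<Longrightarrow> disjs xs \<in> F \<longleftrightarrow> (\<exists>X\<in>set xs. X \<in> F)"
  by (induction xs rule: disjs.induct)
    (auto simp: prime_filter_Disj_iff frm_disjs, simp add: prime_filter_def)

theorem theorem3p10:
  assumes "finite \<Gamma>" and "finite \<Delta>"
    and "\<forall>A\<in>\<Gamma>. frm A" and "\<forall>A\<in>\<Delta>. frm A"
    and "gwf (mset_set \<Gamma>) (mset_set \<Delta>)"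
  shows "\<forall>gs ds. distinct gs \<and> set gs = \<Gamma> \<and> distinct ds \<and> set ds = \<Delta> \<longrightarrow>
           wfn2 (SImp (conjs gs) (disjs ds))"
proof (intro allI impI)
  fix gs ds assume lists: "distinct gs \<and> set gs = \<Gamma> \<and> distinct ds \<and> set ds = \<Delta>"
  have fg: "\<forall>X\<in>set gs. frm X" and fd: "\<forall>X\<in>set ds. frm X" using lists assms(3,4) by auto
  show "wfn2 (SImp (conjs gs) (disjs ds))"
  proof (rule wfn2_SImp_if_prime_filters)
    fix F assume F: "prime_filter F" "conjs gs \<in> F"
    then have "\<forall>X\<in>#mset_set \<Gamma>. holds F X"
      using prime_filter_conjs_iff[OF F(1) fg] lists assms(1,3) holds_iff_mem[OF F(1)] by auto
    then obtain X where "X \<in># mset_set \<Delta>" "holds F X"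
      using gwf_sound[OF assms(5) F(1)] by blast
    then have "X \<in> set ds" "X \<in> F" using lists assms(2,4) holds_iff_mem[OF F(1)] by auto
    then show "disjs ds \<in> F" using prime_filter_disjs_iff[OF F(1) fd] by auto
  qed (use fg fd frm_conjs frm_disjs in auto)
qed

end
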